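(* Let $\mathcal E_i\equiv 1\to H_i\xrightarrow{\alpha_i}G_i\xrightarrow{\beta_i}K_i\to1$ ($i=1,2$) be central extensions of multiplicative Lie algebras and $(\lambda,\mu,\nu)$ a morphism from $\mathcal E_1$ to $\mathcal E_2$. Then $(\lambda,\mu,\nu)$ is an isoclinic morphism if and only if $\nu$ is a multiplicative Lie algebra isomorphism and $\ker\mu\cap{}^M[G_1,G_1]=1$.
   Context: A multiplicative Lie algebra is a group $(G,\cdot)$ with a binary operation $\star$ such that for all $x,y,z\in G$: $x\star x=1$; $x\star(yz)=(x\star y)\,{}^y(x\star z)$; $(xy)\star z={}^x(y\star z)(x\star z)$; $((x\star y)\star{}^yz)((y\star z)\star{}^zx)((z\star x)\star{}^xy)=1$; ${}^z(x\star y)={}^zx\star{}^zy$, where ${}^xy=xyx^{-1}$. Homomorphisms preserve both operations. $Z(G)$ is the group center, $LZ(G)=\{x: x\star y=1\ \forall y\}$, $\mathcal Z(G)=LZ(G)\cap Z(G)$; $[x,y]$ is the group commutator; ${}^M[G,G]=(G\star G)[G,G]$ where $G\star G$ is the ideal generated by all $a\star b$. A central extension is a short exact sequence $1\to H\xrightarrow{\alpha}G\xrightarrow{\beta}K\to1$ of multiplicative Lie algebras with $\alpha(H)\subseteq\mathcal Z(G)$. A morphism $(\lambda,\mu,\nu)$ from $\mathcal E_1$ to $\mathcal E_2$ consists of homomorphisms $\lambda:H_1\to H_2$, $\mu:G_1\to G_2$, $\nu:K_1\to K_2$ with $\mu\alpha_1=\alpha_2\lambda$ and $\beta_2\mu=\nu\beta_1$.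 An isoclinism between $\mathcal E_1,\mathcal E_2$ is a pair of isomorphisms $\lambda':K_1\to K_2$, $\mu':{}^M[G_1,G_1]\to{}^M[G_2,G_2]$ such that $\mu'([g,g'])=[h,h']$ and $\mu'(g\star g')=h\star h'$ whenever $g,g'\in G_1$, $h,h'\in G_2$ satisfy $\beta_2(h)=\lambda'\beta_1(g)$, $\beta_2(h')=\lambda'\beta_1(g')$. A morphism $(\lambda,\mu,\nu)$ is an isoclinic morphism if $(\nu,\mu|_{{}^M[G_1,G_1]})$ is an isoclinism between $\mathcal E_1$ and $\mathcal E_2$. *)

theory Defs
  imports "HOL-Algebra.Algebra"
begin

record 'a mla = "'a monoid" + star :: "'a \<Rightarrow> 'a \<Rightarrow> 'a"

definition mconj :: "('a, 'm) monoid_scheme \<Rightarrow> 'a \<Rightarrow> 'a \<Rightarrow> 'a" where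
  "mconj G x y = x \<otimes>\<^bsub>G\<^esub> y \<otimes>\<^bsub>G\<^esub> inv\<^bsub>G\<^esub> x"

definition mult_lie_alg :: "'a mla \<Rightarrow> bool" where
  "mult_lie_alg G \<longleftrightarrow> group G \<and>
    (\<forall>x\<in>carrier G. \<forall>y\<in>carrier G. star G x y \<in> carrier G) \<and>
    (\<forall>x\<in>carrier G. star G x x = \<one>\<^bsub>G\<^esub>) \<and>
    (\<forall>x\<in>carrier G. \<forall>y\<in>carrier G. \<forall>z\<in>carrier G.
       star G x (y \<otimes>\<^bsub>G\<^esub> z) = star G x y \<otimes>\<^bsub>G\<^esub> mconj G y (star G x z)) \<and>
    (\<forall>x\<in>carrier G. \<forall>y\<in>carrier G. \<forall>z\<in>carrier G.
       star G (x \<otimes>\<^bsub>G\<^esub> y) z = mconj G x (star G y z) \<otimes>\<^bsub>G\<^esub> star G x z) \<and>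
    (\<forall>x\<in>carrier G. \<forall>y\<in>carrier G. \<forall>z\<in>carrier G.
       star G (star G x y) (mconj G y z) \<otimes>\<^bsub>G\<^esub> star G (star G y z) (mconj G z x)
         \<otimes>\<^bsub>G\<^esub> star G (star G z x) (mconj G x y) = \<one>\<^bsub>G\<^esub>) \<and>
    (\<forall>x\<in>carrier G. \<forall>y\<in>carrier G. \<forall>z\<in>carrier G.
       mconj G z (star G x y) = star G (mconj G z x) (mconj G z y))"

definition mla_hom :: "'a mla \<Rightarrow> 'b mla \<Rightarrow> ('a \<Rightarrow> 'b) set" where
  "mla_hom G H = {f. f \<in> hom G H \<and>
     (\<forall>x\<in>carrier G. \<forall>y\<in>carrier G. f (star G x y) = star H (f x) (f y))}"

definition mla_iso :: "'a mla \<Rightarrow> 'b mla \<Rightarrow> ('a \<Rightarrow> 'b) set" where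
  "mla_iso G H = {f. f \<in> mla_hom G H \<and> bij_betw f (carrier G) (carrier H)}"

definition mla_iso_on :: "'a mla \<Rightarrow> 'a set \<Rightarrow> 'b mla \<Rightarrow> 'b set \<Rightarrow> ('a \<Rightarrow> 'b) \<Rightarrow> bool" where
  "mla_iso_on G A H B f \<longleftrightarrow> bij_betw f A B \<and>
     (\<forall>x\<in>A. \<forall>y\<in>A. f (x \<otimes>\<^bsub>G\<^esub> y) = f x \<otimes>\<^bsub>H\<^esub> f y) \<and>
     (\<forall>x\<in>A. \<forall>y\<in>A. f (star G x y) = star H (f x) (f y))"

definition grp_center :: "'a mla \<Rightarrow> 'a set" where
  "grp_center G = {x \<in> carrier G. \<forall>y\<in>carrier G. x \<otimes>\<^bsub>G\<^esub> y = y \<otimes>\<^bsub>G\<^esub> x}"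

definition lie_center :: "'a mla \<Rightarrow> 'a set" where
  "lie_center G = {x \<in> carrier G. \<forall>y\<in>carrier G. star G x y = \<one>\<^bsub>G\<^esub>}"

definition mla_center :: "'a mla \<Rightarrow> 'a set" where
  "mla_center G = lie_center G \<inter> grp_center G"

definition mla_ideal :: "'a mla \<Rightarrow> 'a set \<Rightarrow> bool" where
  "mla_ideal G I \<longleftrightarrow> I \<lhd> G \<and>
     (\<forall>x\<in>I. \<forall>y\<in>carrier G. star G x y \<in> I \<and> star G y x \<in> I)"

text \<open>G \<star> G: the ideal generated by all a \<star> b.\<close>
definition star_ideal :: "'a mla \<Rightarrow> 'a set" where
  "star_ideal G = \<Inter>{I. mla_ideal G I \<and>
      {star G a b | a b. a \<in> carrier G \<and> b \<in> carrier G} \<subseteq> I}"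

text \<open>{}^M[G,G] = (G \<star> G)[G,G].\<close>
definition mcomm :: "'a mla \<Rightarrow> 'a set" where
  "mcomm G = star_ideal G <#>\<^bsub>G\<^esub> derived G (carrier G)"

definition gcomm :: "'a mla \<Rightarrow> 'a \<Rightarrow> 'a \<Rightarrow> 'a" where
  "gcomm G x y = x \<otimes>\<^bsub>G\<^esub> y \<otimes>\<^bsub>G\<^esub> inv\<^bsub>G\<^esub> x \<otimes>\<^bsub>G\<^esub> inv\<^bsub>G\<^esub> y"

definition central_extension :: "'h mla \<Rightarrow> 'g mla \<Rightarrow> 'k mla \<Rightarrow> ('h \<Rightarrow> 'g) \<Rightarrow> ('g \<Rightarrow> 'k) \<Rightarrow> bool" where
  "central_extension H G K \<alpha> \<beta> \<longleftrightarrow>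
     mult_lie_alg H \<and> mult_lie_alg G \<and> mult_lie_alg K \<and>
     \<alpha> \<in> mla_hom H G \<and> \<beta> \<in> mla_hom G K \<and>
     inj_on \<alpha> (carrier H) \<and> \<beta> ` carrier G = carrier K \<and>
     \<alpha> ` carrier H = kernel G K \<beta> \<and>
     \<alpha> ` carrier H \<subseteq> mla_center G"

definition ext_morphism ::
  "'h1 mla \<Rightarrow> 'g1 mla \<Rightarrow> 'k1 mla \<Rightarrow> ('h1 \<Rightarrow> 'g1) \<Rightarrow> ('g1 \<Rightarrow> 'k1) \<Rightarrow>
   'h2 mla \<Rightarrow> 'g2 mla \<Rightarrow> 'k2 mla \<Rightarrow> ('h2 \<Rightarrow> 'g2) \<Rightarrow> ('g2 \<Rightarrow> 'k2) \<Rightarrow>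
   ('h1 \<Rightarrow> 'h2) \<Rightarrow> ('g1 \<Rightarrow> 'g2) \<Rightarrow> ('k1 \<Rightarrow> 'k2) \<Rightarrow> bool" where
  "ext_morphism H1 G1 K1 \<alpha>1 \<beta>1 H2 G2 K2 \<alpha>2 \<beta>2 lam mu nu \<longleftrightarrow>
     lam \<in> mla_hom H1 H2 \<and> mu \<in> mla_hom G1 G2 \<and> nu \<in> mla_hom K1 K2 \<and>
     (\<forall>h\<in>carrier H1. mu (\<alpha>1 h) = \<alpha>2 (lam h)) \<and>
     (\<forall>g\<in>carrier G1. \<beta>2 (mu g) = nu (\<beta>1 g))"

text \<open>An isoclinism (lam', mu'); mu' is only used on {}^M[G1,G1].\<close>
definition isoclinism ::
  "'g1 mla \<Rightarrow> 'k1 mla \<Rightarrow> ('g1 \<Rightarrow> 'k1) \<Rightarrow>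
   'g2 mla \<Rightarrow> 'k2 mla \<Rightarrow> ('g2 \<Rightarrow> 'k2) \<Rightarrow>
   ('k1 \<Rightarrow> 'k2) \<Rightarrow> ('g1 \<Rightarrow> 'g2) \<Rightarrow> bool" where
  "isoclinism G1 K1 \<beta>1 G2 K2 \<beta>2 lam' mu' \<longleftrightarrow>
     lam' \<in> mla_iso K1 K2 \<and>
     mla_iso_on G1 (mcomm G1) G2 (mcomm G2) mu' \<and>
     (\<forall>g\<in>carrier G1. \<forall>g'\<in>carrier G1. \<forall>h\<in>carrier G2. \<forall>h'\<in>carrier G2.
        \<beta>2 h = lam' (\<beta>1 g) \<longrightarrow> \<beta>2 h' = lam' (\<beta>1 g') \<longrightarrow>
        mu' (gcomm G1 g g') = gcomm G2 h h' \<and> mu' (star G1 g g') = star G2 h h')"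

definition isoclinic_morphism ::
  "'g1 mla \<Rightarrow> 'k1 mla \<Rightarrow> ('g1 \<Rightarrow> 'k1) \<Rightarrow>
   'g2 mla \<Rightarrow> 'k2 mla \<Rightarrow> ('g2 \<Rightarrow> 'k2) \<Rightarrow>
   ('g1 \<Rightarrow> 'g2) \<Rightarrow> ('k1 \<Rightarrow> 'k2) \<Rightarrow> bool" where
  "isoclinic_morphism G1 K1 \<beta>1 G2 K2 \<beta>2 mu nu \<longleftrightarrow>
     isoclinism G1 K1 \<beta>1 G2 K2 \<beta>2 nu (restrict mu (mcomm G1))"

end

theory Submission
  imports Defs "HOL-Algebra.SndIsomorphismGrp"
begin

(* Since the kernel of \<beta>2 is central, every element of G2 lying over nu (\<beta>1 g) is
   mu g times a central element, and central factors change neither stars nor group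
   commutators. So the isoclinism identities hold automatically. If nu is onto, mu maps G1
   onto G2 modulo the centre, hence maps the star ideal and the derived subgroup of G1 onto
   those of G2, and mcomm G1 onto mcomm G2. What remains is injectivity of mu on mcomm G1,
   i.e. triviality of its kernel there. *)

lemma (in group_hom) inj_on_subgroup_iff_kernel_Int:
  assumes "subgroup I G"
  shows "inj_on h I \<longleftrightarrow> kernel G H h \<inter> I = {\<one>}"
  using inj_on_subgroup_iff_trivial_ker[OF assms] subgroup.subset[OF assms]
  unfolding kernel_def by auto

lemma (in group) inv_mult_cancel_left [simp]:
  "x \<in> carrier G \<Longrightarrow> y \<in> carrier G \<Longrightarrow> inv x \<otimes> (x \<otimes> y) = y"
  by (simp flip: m_assoc)

lemma (in group) mult_inv_cancel_left [simp]:
  "x \<in> carrier G \<Longrightarrow> y \<in> carrier G \<Longrightarrow> x \<otimes> (inv x \<otimes> y) = y"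
  by (simp flip: m_assoc)

locale mult_lie_algebra =
  fixes G :: "'a mla" (structure)
  assumes mult_lie_alg: "mult_lie_alg G"
begin

sublocale group G
  using mult_lie_alg unfolding mult_lie_alg_def by blast

lemma star_closed [simp]: "x \<in> carrier G \<Longrightarrow> y \<in> carrier G \<Longrightarrow> star G x y \<in> carrier G"
  using mult_lie_alg unfolding mult_lie_alg_def by blast

lemma star_self [simp]: "x \<in> carrier G \<Longrightarrow> star G x x = \<one>"
  using mult_lie_alg unfolding mult_lie_alg_def by blast

lemma star_mult_right:
  "\<lbrakk>x \<in> carrier G; y \<in> carrier G; z \<in> carrier G\<rbrakk> \<Longrightarrow>
   star G x (y \<otimes> z) = star G x y \<otimes> mconj G y (star G x z)"
  using mult_lie_alg unfolding mult_lie_alg_def by blast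

lemma star_mult_left:
  "\<lbrakk>x \<in> carrier G; y \<in> carrier G; z \<in> carrier G\<rbrakk> \<Longrightarrow>
   star G (x \<otimes> y) z = mconj G x (star G y z) \<otimes> star G x z"
  using mult_lie_alg unfolding mult_lie_alg_def by blast

lemma mconj_closed [simp]: "x \<in> carrier G \<Longrightarrow> y \<in> carrier G \<Longrightarrow> mconj G x y \<in> carrier G"
  unfolding mconj_def by simp

lemma mconj_one [simp]: "x \<in> carrier G \<Longrightarrow> mconj G x \<one> = \<one>"
  unfolding mconj_def by simp

lemma mconj_mult:
  "\<lbrakk>x \<in> carrier G; a \<in> carrier G; b \<in> carrier G\<rbrakk> \<Longrightarrow>
   mconj G x a \<otimes> mconj G x b = mconj G x (a \<otimes> b)"
  unfolding mconj_def by (simp add: m_assoc)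

lemma mconj_eq_one_iff:
  "x \<in> carrier G \<Longrightarrow> a \<in> carrier G \<Longrightarrow> mconj G x a = \<one> \<longleftrightarrow> a = \<one>"
  unfolding mconj_def by (metis m_closed inv_closed r_inv r_one r_cancel l_cancel_one)

lemma star_swap:
  assumes x: "x \<in> carrier G" and y: "y \<in> carrier G"
  shows "star G y x \<otimes> star G x y = \<one>"
proof -
  have "\<one> = star G (x \<otimes> y) (x \<otimes> y)" using x y by simp
  also have "\<dots> = mconj G x (star G y (x \<otimes> y)) \<otimes> star G x (x \<otimes> y)"
    using star_mult_left[of x y "x \<otimes> y"] x y by simp
  also have "star G y (x \<otimes> y) = star G y x"
    using star_mult_right[of y x y] x y by simp
  also have "star G x (x \<otimes> y) = mconj G x (star G x y)"
    using star_mult_right[of x x y] x y by simp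
  finally have "mconj G x (star G y x \<otimes> star G x y) = \<one>"
    using x y by (simp add: mconj_mult)
  thus ?thesis using x y by (simp add: mconj_eq_one_iff)
qed

lemma lie_center_closed: "z \<in> lie_center G \<Longrightarrow> z \<in> carrier G"
  unfolding lie_center_def by simp

lemma star_lie_center_right: "x \<in> carrier G \<Longrightarrow> z \<in> lie_center G \<Longrightarrow> star G x z = \<one>"
  using star_swap[of x z] unfolding lie_center_def by auto

lemma star_mult_lie_center_left:
  "\<lbrakk>a \<in> carrier G; b \<in> carrier G; z \<in> lie_center G\<rbrakk> \<Longrightarrow> star G (a \<otimes> z) b = star G a b"
  using star_mult_left[of a z b] unfolding lie_center_def by auto

lemma star_mult_lie_center_right:
  assumes "a \<in> carrier G" "b \<in> carrier G" "w \<in> lie_center G"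
  shows "star G a (b \<otimes> w) = star G a b"
  using assms star_mult_right[of a b w] star_lie_center_right[of a w]
  by (simp add: lie_center_def)

lemma grp_center_closed: "z \<in> grp_center G \<Longrightarrow> z \<in> carrier G"
  unfolding grp_center_def by simp

lemma grp_center_left_commute:
  assumes "z \<in> grp_center G" "x \<in> carrier G" "y \<in> carrier G"
  shows "z \<otimes> (x \<otimes> y) = x \<otimes> (z \<otimes> y)"
proof -
  have "z \<otimes> x = x \<otimes> z" using assms unfolding grp_center_def by simp
  thus ?thesis using assms grp_center_closed by (simp flip: m_assoc)
qed

lemma mconj_mult_grp_center:
  assumes "a \<in> carrier G" "h \<in> carrier G" "z \<in> grp_center G"
  shows "mconj G (a \<otimes> z) h = mconj G a h"
  using assms grp_center_closed grp_center_left_commute[of z h "inv z \<otimes> inv a"]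
  unfolding mconj_def by (simp add: m_assoc inv_mult_group)

lemma gcomm_eq: "x \<in> carrier G \<Longrightarrow> y \<in> carrier G \<Longrightarrow> gcomm G x y = x \<otimes> y \<otimes> inv (y \<otimes> x)"
  unfolding gcomm_def by (simp add: m_assoc inv_mult_group)

lemma gcomm_mult_grp_center:
  assumes a: "a \<in> carrier G" and b: "b \<in> carrier G"
    and z: "z \<in> grp_center G" and w: "w \<in> grp_center G"
  shows "gcomm G (a \<otimes> z) (b \<otimes> w) = gcomm G a b"
proof -
  have zw: "z \<in> carrier G" "w \<in> carrier G" using z w grp_center_closed by auto
  have "a \<otimes> z \<otimes> (b \<otimes> w) = a \<otimes> b \<otimes> (z \<otimes> w)"
    using a b zw grp_center_left_commute[OF z b zw(2)] by (simp add: m_assoc)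
  moreover have "b \<otimes> w \<otimes> (a \<otimes> z) = b \<otimes> a \<otimes> (z \<otimes> w)"
    using a b zw grp_center_left_commute[OF w a zw(1)] w unfolding grp_center_def
    by (simp add: m_assoc)
  ultimately show ?thesis
    using a b zw by (simp add: gcomm_eq inv_mult_group m_assoc)
qed

lemma star_mult_mla_center:
  "\<lbrakk>a \<in> carrier G; b \<in> carrier G; z \<in> mla_center G; w \<in> mla_center G\<rbrakk>
   \<Longrightarrow> star G (a \<otimes> z) (b \<otimes> w) = star G a b"
  using star_mult_lie_center_left[of a "b \<otimes> w" z] star_mult_lie_center_right[of a b w]
    lie_center_closed[of w]
  by (simp add: mla_center_def)

lemma gcomm_mult_mla_center:
  "\<lbrakk>a \<in> carrier G; b \<in> carrier G; z \<in> mla_center G; w \<in> mla_center G\<rbrakk>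
   \<Longrightarrow> gcomm G (a \<otimes> z) (b \<otimes> w) = gcomm G a b"
  by (simp add: mla_center_def gcomm_mult_grp_center)

lemma mla_ideal_carrier: "mla_ideal G (carrier G)"
  unfolding mla_ideal_def using normal_inv_iff subgroup_self by auto

lemma mla_ideal_Inter:
  assumes "F \<noteq> {}" and "\<And>I. I \<in> F \<Longrightarrow> mla_ideal G I"
  shows "mla_ideal G (\<Inter>F)"
proof -
  have "subgroup (\<Inter>F) G"
    using assms by (intro subgroups_Inter) (auto simp: mla_ideal_def normal_imp_subgroup)
  moreover have "x \<otimes> h \<otimes> inv x \<in> \<Inter>F" if "x \<in> carrier G" "h \<in> \<Inter>F" for x h
    using assms that unfolding mla_ideal_def by (auto intro: normal.inv_op_closed2)
  ultimately show ?thesis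
    using assms unfolding mla_ideal_def normal_inv_iff by blast
qed

lemma star_ideal_is_ideal: "mla_ideal G (star_ideal G)"
  unfolding star_ideal_def using mla_ideal_carrier by (intro mla_ideal_Inter) auto

lemma star_ideal_normal: "star_ideal G \<lhd> G"
  using star_ideal_is_ideal unfolding mla_ideal_def by blast

lemma star_ideal_subset: "star_ideal G \<subseteq> carrier G"
  using normal_imp_subgroup[OF star_ideal_normal] subgroup.subset by blast

lemma star_ideal_least:
  "mla_ideal G I \<Longrightarrow> (\<And>a b. a \<in> carrier G \<Longrightarrow> b \<in> carrier G \<Longrightarrow> star G a b \<in> I)
   \<Longrightarrow> star_ideal G \<subseteq> I"
  unfolding star_ideal_def by blast

lemma star_in_star_ideal: "a \<in> carrier G \<Longrightarrow> b \<in> carrier G \<Longrightarrow> star G a b \<in> star_ideal G"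
  unfolding star_ideal_def by blast

lemma derived_subgroup: "subgroup (derived G (carrier G)) G"
  by (simp add: derived_is_subgroup)

lemma mcomm_second_isomorphism:
  "second_isomorphism_grp (star_ideal G) G (derived G (carrier G))"
  by (intro second_isomorphism_grp.intro second_isomorphism_grp_axioms.intro
      star_ideal_normal derived_subgroup)

lemma mcomm_subgroup: "subgroup (mcomm G) G"
  unfolding mcomm_def
  by (rule second_isomorphism_grp.normal_set_mult_subgroup[OF mcomm_second_isomorphism])

lemma mcomm_subset: "mcomm G \<subseteq> carrier G"
  using mcomm_subgroup subgroup.subset by blast

lemma star_in_mcomm: "a \<in> carrier G \<Longrightarrow> b \<in> carrier G \<Longrightarrow> star G a b \<in> mcomm G"
  using second_isomorphism_grp.H_contained_in_set_mult[OF mcomm_second_isomorphism]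
    star_in_star_ideal
  unfolding mcomm_def by blast

lemma gcomm_in_mcomm: "a \<in> carrier G \<Longrightarrow> b \<in> carrier G \<Longrightarrow> gcomm G a b \<in> mcomm G"
  using second_isomorphism_grp.S_contained_in_set_mult[OF mcomm_second_isomorphism]
  unfolding mcomm_def derived_def gcomm_def by (blast intro: generate.incl)

end

locale mult_lie_hom = G: mult_lie_algebra G + H: mult_lie_algebra H
  for G :: "'a mla" (structure) and H :: "'b mla" (structure) +
  fixes f :: "'a \<Rightarrow> 'b"
  assumes mla_hom: "f \<in> mla_hom G H"
begin

sublocale group_hom G H f
  using mla_hom unfolding mla_hom_def
  by (intro group_hom.intro group_hom_axioms.intro G.group_axioms H.group_axioms) simp

lemma hom_star:
  "x \<in> carrier G \<Longrightarrow> y \<in> carrier G \<Longrightarrow> f (star G x y) = star H (f x) (f y)"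
  using mla_hom unfolding mla_hom_def by blast

lemma hom_gcomm:
  "x \<in> carrier G \<Longrightarrow> y \<in> carrier G \<Longrightarrow> f (gcomm G x y) = gcomm H (f x) (f y)"
  by (simp add: gcomm_def)

lemma mla_ideal_vimage:
  assumes J: "mla_ideal H J"
  shows "mla_ideal G {x \<in> carrier G. f x \<in> J}"
proof -
  have "J \<lhd> H" using J unfolding mla_ideal_def by blast
  then interpret J: normal J H .
  have "subgroup {x \<in> carrier G. f x \<in> J} G"
    by (rule G.subgroupI)
      (auto simp: J.m_closed J.m_inv_closed J.one_closed intro!: exI[of _ "\<one>\<^bsub>G\<^esub>"])
  moreover have "f (x \<otimes>\<^bsub>G\<^esub> y \<otimes>\<^bsub>G\<^esub> inv\<^bsub>G\<^esub> x) \<in> J"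
    if "x \<in> carrier G" "y \<in> carrier G" "f y \<in> J" for x y
    using that J.inv_op_closed2 by simp
  ultimately have "{x \<in> carrier G. f x \<in> J} \<lhd> G"
    by (simp add: G.normal_inv_iff)
  thus ?thesis using J unfolding mla_ideal_def by (simp add: hom_star)
qed

lemma image_star_ideal_subset: "f ` star_ideal G \<subseteq> star_ideal H"
proof -
  have "star_ideal G \<subseteq> {x \<in> carrier G. f x \<in> star_ideal H}"
    by (rule G.star_ideal_least)
      (simp_all add: mla_ideal_vimage H.star_ideal_is_ideal H.star_in_star_ideal hom_star)
  thus ?thesis by blast
qed

lemma star_mult_mla_center_image:
  "\<lbrakk>g \<in> carrier G; g' \<in> carrier G; z \<in> mla_center H; z' \<in> mla_center H\<rbrakk>
   \<Longrightarrow> star H (f g \<otimes>\<^bsub>H\<^esub> z) (f g' \<otimes>\<^bsub>H\<^esub> z') = f (star G g g')"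
  by (simp add: H.star_mult_mla_center hom_star)

lemma gcomm_mult_mla_center_image:
  "\<lbrakk>g \<in> carrier G; g' \<in> carrier G; z \<in> mla_center H; z' \<in> mla_center H\<rbrakk>
   \<Longrightarrow> gcomm H (f g \<otimes>\<^bsub>H\<^esub> z) (f g' \<otimes>\<^bsub>H\<^esub> z') = f (gcomm G g g')"
  by (simp add: H.gcomm_mult_mla_center hom_gcomm)

lemma mla_iso_on_restrict:
  assumes "subgroup A G" and "\<And>x y. x \<in> A \<Longrightarrow> y \<in> A \<Longrightarrow> star G x y \<in> A"
    and "inj_on f A" and "f ` A = B"
  shows "mla_iso_on G A H B (restrict f A)"
  using assms subgroup.subset[OF assms(1)] subgroup.m_closed[OF assms(1)]
  unfolding mla_iso_on_def bij_betw_restrict_eq bij_betw_def by (auto simp: subset_iff hom_star)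

end

locale mult_lie_hom_onto_mod_center = mult_lie_hom +
  assumes onto_mod_center:
    "h \<in> carrier H \<Longrightarrow> \<exists>g\<in>carrier G. \<exists>z\<in>mla_center H. h = f g \<otimes>\<^bsub>H\<^esub> z"
begin

lemma mla_ideal_image:
  assumes I: "mla_ideal G I"
  shows "mla_ideal H (f ` I)"
proof -
  have normal: "I \<lhd> G" using I unfolding mla_ideal_def by blast
  have "y \<otimes>\<^bsub>H\<^esub> x \<otimes>\<^bsub>H\<^esub> inv\<^bsub>H\<^esub> y \<in> f ` I \<and> star H x y \<in> f ` I \<and> star H y x \<in> f ` I"
    if xy: "x \<in> f ` I" "y \<in> carrier H" for x y
  proof -
    obtain s where s: "s \<in> I" "x = f s" using xy(1) by blast
    have s_carrier: "s \<in> carrier G"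
      using subgroup.mem_carrier[OF normal_imp_subgroup[OF normal] s(1)] .
    obtain g z where g: "g \<in> carrier G" and z: "z \<in> mla_center H" and y: "y = f g \<otimes>\<^bsub>H\<^esub> z"
      using onto_mod_center[OF xy(2)] by blast
    have "y \<otimes>\<^bsub>H\<^esub> x \<otimes>\<^bsub>H\<^esub> inv\<^bsub>H\<^esub> y = f (g \<otimes>\<^bsub>G\<^esub> s \<otimes>\<^bsub>G\<^esub> inv\<^bsub>G\<^esub> g)"
      using H.mconj_mult_grp_center[of "f g" "f s" z] s_carrier s g z y
      by (simp add: mconj_def mla_center_def)
    moreover have "star H x y = f (star G s g)" and "star H y x = f (star G g s)"
      using H.star_mult_lie_center_right[of "f s" "f g" z]
        H.star_mult_lie_center_left[of "f g" "f s" z] s_carrier s g z y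
      by (simp_all add: mla_center_def hom_star)
    ultimately show ?thesis
      using I s g normal.inv_op_closed2[OF normal] unfolding mla_ideal_def by blast
  qed
  moreover have "subgroup (f ` I) H"
    by (rule subgroup_img_is_subgroup[OF normal_imp_subgroup[OF normal]])
  ultimately show ?thesis
    unfolding mla_ideal_def H.normal_inv_iff by blast
qed

lemma image_star_ideal: "f ` star_ideal G = star_ideal H"
proof (rule antisym[OF image_star_ideal_subset])
  show "star_ideal H \<subseteq> f ` star_ideal G"
  proof (rule H.star_ideal_least)
    show "mla_ideal H (f ` star_ideal G)"
      by (rule mla_ideal_image[OF G.star_ideal_is_ideal])
  next
    fix a b assume a: "a \<in> carrier H" and b: "b \<in> carrier H"
    obtain g z where "g \<in> carrier G" "z \<in> mla_center H" "a = f g \<otimes>\<^bsub>H\<^esub> z"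
      using onto_mod_center[OF a] by blast
    moreover obtain g' z' where "g' \<in> carrier G" "z' \<in> mla_center H" "b = f g' \<otimes>\<^bsub>H\<^esub> z'"
      using onto_mod_center[OF b] by blast
    ultimately show "star H a b \<in> f ` star_ideal G"
      using star_mult_mla_center_image G.star_in_star_ideal by auto
  qed
qed

lemma image_derived: "f ` derived G (carrier G) = derived H (carrier H)"
proof -
  have "derived_set H (f ` carrier G) \<subseteq> derived_set H (carrier H)"
    by (rule H.mono_derived_set) auto
  moreover have "derived_set H (carrier H) \<subseteq> derived_set H (f ` carrier G)"
  proof
    fix x assume "x \<in> derived_set H (carrier H)"
    then obtain a b where a: "a \<in> carrier H" and b: "b \<in> carrier H" and x: "x = gcomm H a b"
      unfolding gcomm_def by blast
    obtain g z where g: "g \<in> carrier G" and "z \<in> mla_center H" "a = f g \<otimes>\<^bsub>H\<^esub> z"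
      using onto_mod_center[OF a] by blast
    moreover obtain g' z' where g': "g' \<in> carrier G" and "z' \<in> mla_center H" "b = f g' \<otimes>\<^bsub>H\<^esub> z'"
      using onto_mod_center[OF b] by blast
    ultimately have "x = gcomm H (f g) (f g')"
      using x gcomm_mult_mla_center_image hom_gcomm by simp
    then show "x \<in> derived_set H (f ` carrier G)"
      using g g' unfolding gcomm_def by blast
  qed
  ultimately have "derived_set H (f ` carrier G) = derived_set H (carrier H)"
    by (rule subset_antisym)
  then show ?thesis
    using derived_img[of "carrier G"] unfolding derived_def by simp
qed

lemma image_mcomm: "f ` mcomm G = mcomm H"
  unfolding mcomm_def
  using set_mult_hom[OF homh G.star_ideal_subset G.derived_in_carrier[OF subset_refl]]
  by (simp add: image_star_ideal image_derived)

end

lemma central_extension_mult_lie_hom: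
  "central_extension H G K \<alpha> \<beta> \<Longrightarrow> mult_lie_hom G K \<beta>"
  unfolding central_extension_def
  by (simp add: mult_lie_hom.intro mult_lie_hom_axioms.intro mult_lie_algebra.intro)

lemma central_extension_fiber:
  assumes ce: "central_extension H G K \<alpha> \<beta>"
    and a: "a \<in> carrier G" and b: "b \<in> carrier G" and eq: "\<beta> a = \<beta> b"
  shows "\<exists>z\<in>mla_center G. a = b \<otimes>\<^bsub>G\<^esub> z"
proof -
  interpret mult_lie_hom G K \<beta>
    using ce by (rule central_extension_mult_lie_hom)
  have "inv\<^bsub>G\<^esub> b \<otimes>\<^bsub>G\<^esub> a \<in> kernel G K \<beta>"
    using a b eq by (simp add: kernel_def)
  then have "inv\<^bsub>G\<^esub> b \<otimes>\<^bsub>G\<^esub> a \<in> mla_center G"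
    using ce unfolding central_extension_def by blast
  then show ?thesis using a b by force
qed

lemma ext_morphism_mult_lie_hom:
  assumes "central_extension H1 G1 K1 \<alpha>1 \<beta>1" and "central_extension H2 G2 K2 \<alpha>2 \<beta>2"
    and "ext_morphism H1 G1 K1 \<alpha>1 \<beta>1 H2 G2 K2 \<alpha>2 \<beta>2 lam mu nu"
  shows "mult_lie_hom G1 G2 mu"
  using assms unfolding central_extension_def ext_morphism_def
  by (simp add: mult_lie_hom.intro mult_lie_hom_axioms.intro mult_lie_algebra.intro)

lemma ext_morphism_fiber:
  assumes "central_extension H1 G1 K1 \<alpha>1 \<beta>1" and ce2: "central_extension H2 G2 K2 \<alpha>2 \<beta>2"
    and m: "ext_morphism H1 G1 K1 \<alpha>1 \<beta>1 H2 G2 K2 \<alpha>2 \<beta>2 lam mu nu"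
    and g: "g \<in> carrier G1" and h: "h \<in> carrier G2" and eq: "\<beta>2 h = nu (\<beta>1 g)"
  shows "\<exists>z\<in>mla_center G2. h = mu g \<otimes>\<^bsub>G2\<^esub> z"
proof -
  interpret mult_lie_hom G1 G2 mu
    using ext_morphism_mult_lie_hom assms(1-3) .
  have "\<beta>2 h = \<beta>2 (mu g)" using m g eq unfolding ext_morphism_def by simp
  then show ?thesis using central_extension_fiber[OF ce2 h] g by simp
qed

lemma ext_morphism_onto_mod_center:
  assumes ce1: "central_extension H1 G1 K1 \<alpha>1 \<beta>1" and ce2: "central_extension H2 G2 K2 \<alpha>2 \<beta>2"
    and m: "ext_morphism H1 G1 K1 \<alpha>1 \<beta>1 H2 G2 K2 \<alpha>2 \<beta>2 lam mu nu"
    and onto: "nu ` carrier K1 = carrier K2"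
  shows "mult_lie_hom_onto_mod_center G1 G2 mu"
proof (intro mult_lie_hom_onto_mod_center.intro mult_lie_hom_onto_mod_center_axioms.intro)
  show "mult_lie_hom G1 G2 mu"
    using ce1 ce2 m by (rule ext_morphism_mult_lie_hom)
next
  fix h assume h: "h \<in> carrier G2"
  have "\<beta>2 \<in> hom G2 K2" and "\<beta>1 ` carrier G1 = carrier K1"
    using ce1 ce2 by (simp_all add: central_extension_def mla_hom_def)
  then have "\<beta>2 h \<in> nu ` \<beta>1 ` carrier G1"
    using h hom_in_carrier onto by metis
  then obtain g where "g \<in> carrier G1" "\<beta>2 h = nu (\<beta>1 g)" by blast
  then show "\<exists>g\<in>carrier G1. \<exists>z\<in>mla_center G2. h = mu g \<otimes>\<^bsub>G2\<^esub> z"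
    using ext_morphism_fiber[OF ce1 ce2 m _ h] by blast
qed

lemma ext_morphism_gcomm_star_fiber:
  assumes "central_extension H1 G1 K1 \<alpha>1 \<beta>1" and "central_extension H2 G2 K2 \<alpha>2 \<beta>2"
    and "ext_morphism H1 G1 K1 \<alpha>1 \<beta>1 H2 G2 K2 \<alpha>2 \<beta>2 lam mu nu"
    and g: "g \<in> carrier G1" "g' \<in> carrier G1" and h: "h \<in> carrier G2" "h' \<in> carrier G2"
    and over: "\<beta>2 h = nu (\<beta>1 g)" "\<beta>2 h' = nu (\<beta>1 g')"
  shows "gcomm G2 h h' = mu (gcomm G1 g g') \<and> star G2 h h' = mu (star G1 g g')"
proof -
  interpret mult_lie_hom G1 G2 mu
    using ext_morphism_mult_lie_hom assms(1-3) .
  obtain z where "z \<in> mla_center G2" "h = mu g \<otimes>\<^bsub>G2\<^esub> z"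
    using ext_morphism_fiber[OF assms(1-3) g(1) h(1) over(1)] by blast
  moreover obtain z' where "z' \<in> mla_center G2" "h' = mu g' \<otimes>\<^bsub>G2\<^esub> z'"
    using ext_morphism_fiber[OF assms(1-3) g(2) h(2) over(2)] by blast
  ultimately show ?thesis
    using g by (simp add: gcomm_mult_mla_center_image star_mult_mla_center_image)
qed

theorem theorem4p5:
  fixes H1 :: "'h1 mla" and G1 :: "'g1 mla" and K1 :: "'k1 mla"
    and H2 :: "'h2 mla" and G2 :: "'g2 mla" and K2 :: "'k2 mla"
    and \<alpha>1 :: "'h1 \<Rightarrow> 'g1" and \<beta>1 :: "'g1 \<Rightarrow> 'k1"
    and \<alpha>2 :: "'h2 \<Rightarrow> 'g2" and \<beta>2 :: "'g2 \<Rightarrow> 'k2"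
    and lam :: "'h1 \<Rightarrow> 'h2" and mu :: "'g1 \<Rightarrow> 'g2" and nu :: "'k1 \<Rightarrow> 'k2"
  assumes "central_extension H1 G1 K1 \<alpha>1 \<beta>1"
    and "central_extension H2 G2 K2 \<alpha>2 \<beta>2"
    and "ext_morphism H1 G1 K1 \<alpha>1 \<beta>1 H2 G2 K2 \<alpha>2 \<beta>2 lam mu nu"
  shows "isoclinic_morphism G1 K1 \<beta>1 G2 K2 \<beta>2 mu nu \<longleftrightarrow>
    (nu \<in> mla_iso K1 K2 \<and> kernel G1 G2 mu \<inter> mcomm G1 = {\<one>\<^bsub>G1\<^esub>})"
proof -
  interpret mult_lie_hom G1 G2 mu
    using ext_morphism_mult_lie_hom assms .
  have inj_iff: "inj_on mu (mcomm G1) \<longleftrightarrow> kernel G1 G2 mu \<inter> mcomm G1 = {\<one>\<^bsub>G1\<^esub>}"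
    by (rule inj_on_subgroup_iff_kernel_Int[OF G.mcomm_subgroup])
  show ?thesis
  proof
    assume "isoclinic_morphism G1 K1 \<beta>1 G2 K2 \<beta>2 mu nu"
    then show "nu \<in> mla_iso K1 K2 \<and> kernel G1 G2 mu \<inter> mcomm G1 = {\<one>\<^bsub>G1\<^esub>}"
      unfolding isoclinic_morphism_def isoclinism_def mla_iso_on_def inj_iff[symmetric]
      by (simp add: bij_betw_def)
  next
    assume nu: "nu \<in> mla_iso K1 K2 \<and> kernel G1 G2 mu \<inter> mcomm G1 = {\<one>\<^bsub>G1\<^esub>}"
    then have "nu ` carrier K1 = carrier K2"
      unfolding mla_iso_def by (simp add: bij_betw_def)
    then interpret mult_lie_hom_onto_mod_center G1 G2 mu
      by (rule ext_morphism_onto_mod_center[OF assms])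
    have "mla_iso_on G1 (mcomm G1) G2 (mcomm G2) (restrict mu (mcomm G1))"
      using nu inj_iff G.mcomm_subset
      by (intro mla_iso_on_restrict G.mcomm_subgroup image_mcomm) (auto intro: G.star_in_mcomm)
    moreover have "restrict mu (mcomm G1) (gcomm G1 g g') = gcomm G2 h h'
        \<and> restrict mu (mcomm G1) (star G1 g g') = star G2 h h'"
      if "g \<in> carrier G1" "g' \<in> carrier G1" "h \<in> carrier G2" "h' \<in> carrier G2"
        "\<beta>2 h = nu (\<beta>1 g)" "\<beta>2 h' = nu (\<beta>1 g')" for g g' h h'
      using that ext_morphism_gcomm_star_fiber[OF assms that]
      by (simp add: G.gcomm_in_mcomm G.star_in_mcomm)
    ultimately show "isoclinic_morphism G1 K1 \<beta>1 G2 K2 \<beta>2 mu nu"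
      unfolding isoclinic_morphism_def isoclinism_def using nu by blast
  qed
qed

end
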